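(* For $n\ge1$ and complex parameters, the superalgebras $L(\beta_{\lfloor\frac{n+5}{2}\rfloor},\dots,\beta_{n+1})$ and $L(\beta'_{\lfloor\frac{n+5}{2}\rfloor},\dots,\beta'_{n+1})$ are isomorphic if and only if there exist $a_1,b_{n+2}\in\mathbb{C}$, both nonzero, such that $b_{n+2}\beta_j=a_1^{2j-3}\beta'_j$ for all $\lfloor\frac{n+5}{2}\rfloor\le j\le n+1$.
   Context: $L(\beta_{\lfloor\frac{n+5}{2}\rfloor},\dots,\beta_{n+1})$ denotes the complex Leibniz superalgebra with even basis $x_1,\dots,x_n$, odd basis $y_1,\dots,y_{n+2}$ and products $[x_i,x_1]=x_{i+1}$ ($1\le i\le n-1$), $[y_j,x_1]=y_{j+1}$ ($1\le j\le n$), $[x_i,y_1]=\tfrac12 y_{i+1}$ ($1\le i\le n$), $[y_j,y_1]=x_j$ ($1\le j\le n$), $[x_i,y_{n+2}]=\sum_{k=\lfloor\frac{n+5}{2}\rfloor}^{n+2-i}\beta_k y_{k-1+i}$ ($1\le i\le\lfloor\frac n2\rfloor$), $[y_j,y_{n+2}]=-2\sum_{k=\lfloor\frac{n+5}{2}\rfloor}^{n+2-j}\beta_k x_{k-2+j}$ ($1\le j\le\lfloor\frac n2\rfloor$), all other products of basis elements zero. A Leibniz superalgebra is a $\mathbb{Z}_2$-graded vector space with a bilinear product respecting the grading and satisfying $[x,[y,z]]=[[x,y],z]-(-1)^{\alpha\beta}[[x,z],y]$ for $y\in L_\alpha,z\in L_\beta$; an isomorphism is a grading-preserving bijective linear map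 preserving the product. $\lfloor\cdot\rfloor$ is the integer part. *)

theory Defs
  imports Complex_Main
begin

text \<open>Basis indices of the superalgebra: X i = x_i (even), Y j = y_j (odd).
  Elements of the algebra are coordinate functions on these indices, supported
  on the basis x_1..x_n, y_1..y_(n+2).\<close>

datatype bidx = X nat | Y nat

type_synonym vec = "bidx \<Rightarrow> complex"

definition even_basis :: "nat \<Rightarrow> bidx set" where
  "even_basis n = X ` {1..n}"

definition odd_basis :: "nat \<Rightarrow> bidx set" where
  "odd_basis n = Y ` {1..n+2}"

definition basis :: "nat \<Rightarrow> bidx set" where
  "basis n = even_basis n \<union> odd_basis n"

definition sspace :: "nat \<Rightarrow> vec set" where
  "sspace n = {u. \<forall>b. u b \<noteq> 0 \<longrightarrow> b \<in> basis n}"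

definition even_part :: "nat \<Rightarrow> vec set" where
  "even_part n = {u. \<forall>b. u b \<noteq> 0 \<longrightarrow> b \<in> even_basis n}"

definition odd_part :: "nat \<Rightarrow> vec set" where
  "odd_part n = {u. \<forall>b. u b \<noteq> 0 \<longrightarrow> b \<in> odd_basis n}"

definition ev :: "bidx \<Rightarrow> vec" where
  "ev b = (\<lambda>c. if c = b then 1 else 0)"

definition lb :: "nat \<Rightarrow> nat" where
  "lb n = (n + 5) div 2"

definition bprod :: "nat \<Rightarrow> (nat \<Rightarrow> complex) \<Rightarrow> bidx \<Rightarrow> bidx \<Rightarrow> vec" where
  "bprod n \<beta> a b =
    (case (a, b) of
      (X i, X l) \<Rightarrow> if l = 1 \<and> 1 \<le> i \<and> i \<le> n - 1 then ev (X (i+1)) else (\<lambda>_. 0)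
    | (Y j, X l) \<Rightarrow> if l = 1 \<and> 1 \<le> j \<and> j \<le> n then ev (Y (j+1)) else (\<lambda>_. 0)
    | (X i, Y l) \<Rightarrow>
        if l = 1 \<and> 1 \<le> i \<and> i \<le> n then (\<lambda>c. (1/2) * ev (Y (i+1)) c)
        else if l = n + 2 \<and> 1 \<le> i \<and> i \<le> n div 2
          then (\<lambda>c. \<Sum>k\<in>{lb n..n+2-i}. \<beta> k * ev (Y (k - 1 + i)) c)
        else (\<lambda>_. 0)
    | (Y j, Y l) \<Rightarrow>
        if l = 1 \<and> 1 \<le> j \<and> j \<le> n then ev (X j)
        else if l = n + 2 \<and> 1 \<le> j \<and> j \<le> n div 2
          then (\<lambda>c. -2 * (\<Sum>k\<in>{lb n..n+2-j}. \<beta> k * ev (X (k - 2 + j)) c))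
        else (\<lambda>_. 0))"

definition lprod :: "nat \<Rightarrow> (nat \<Rightarrow> complex) \<Rightarrow> vec \<Rightarrow> vec \<Rightarrow> vec" where
  "lprod n \<beta> u v = (\<lambda>c. \<Sum>a\<in>basis n. \<Sum>b\<in>basis n. u a * v b * bprod n \<beta> a b c)"

definition super_iso :: "nat \<Rightarrow> (nat \<Rightarrow> complex) \<Rightarrow> (nat \<Rightarrow> complex) \<Rightarrow> (vec \<Rightarrow> vec) \<Rightarrow> bool" where
  "super_iso n \<beta> \<beta>' \<phi> \<longleftrightarrow>
     (\<forall>u\<in>sspace n. \<forall>v\<in>sspace n. \<forall>s t::complex.
        \<phi> (\<lambda>c. s * u c + t * v c) = (\<lambda>c. s * \<phi> u c + t * \<phi> v c)) \<and>
     bij_betw \<phi> (sspace n) (sspace n) \<and>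
     \<phi> ` even_part n \<subseteq> even_part n \<and>
     \<phi> ` odd_part n \<subseteq> odd_part n \<and>
     (\<forall>u\<in>sspace n. \<forall>v\<in>sspace n. \<phi> (lprod n \<beta> u v) = lprod n \<beta>' (\<phi> u) (\<phi> v))"

definition isomorphic_L :: "nat \<Rightarrow> (nat \<Rightarrow> complex) \<Rightarrow> (nat \<Rightarrow> complex) \<Rightarrow> bool" where
  "isomorphic_L n \<beta> \<beta>' \<longleftrightarrow> (\<exists>\<phi>. super_iso n \<beta> \<beta>' \<phi>)"

end

theory Submission
  imports Defs
begin

(* Sufficiency: the diagonal map with weights e^(2i) on x_i, e^(2j-1) on y_j (j \<le> n+1) and g on
   y_(n+2) is compatible with every structure constant not involving beta, while on the constants
   carrying beta_k the weights differ by the factor e^(2k-3)/g. So for e = 1/a_1 and g = 1/b it is an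
   isomorphism.

   Necessity: let \<phi> be an isomorphism, \<alpha> the y_1-coordinate of \<phi>(y_1) and \<gamma> the
   y_(n+2)-coordinate of \<phi>(y_(n+2)). From x_1 = [y_1,y_1] the x_1-coordinate of \<phi>(x_1) is \<alpha>^2,
   and from y_(k+1) = [y_k,x_1] the y_m-coordinate of \<phi>(y_k) is \<alpha>^(2k-2) times the
   y_(m+1-k)-coordinate of \<phi>(y_1). Surjectivity forces \<alpha> \<noteq> 0 (x_1 must be hit) and injectivity
   forces \<gamma> \<noteq> 0 (otherwise \<phi>(y_(n+2)) is a multiple of \<phi>(y_(n+1))). Applying \<phi> to
   [x_1,y_(n+2)] = \<Sum> beta_k y_k and comparing y_m-coordinates gives a triangular linear system
   with diagonal \<alpha> in the unknowns \<gamma> \<alpha> beta'_k - \<alpha>^(2k-2) beta_k, so all of them vanish; this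
   is the claim with a_1 = 1/\<alpha> and b = 1/\<gamma>. *)

lemma sum_single_nonzero:
  assumes "finite S" "\<And>i. i \<in> S \<Longrightarrow> i \<noteq> k \<Longrightarrow> f i = 0"
  shows "sum f S = (if k \<in> S then f k else 0)"
  using assms by (auto intro: sum.neutral simp: sum.remove)

lemma triangular_system_zero:
  fixes b D :: "nat \<Rightarrow> 'a :: idom"
  assumes "b 1 \<noteq> 0"
    and system: "\<And>m. l \<le> m \<Longrightarrow> m \<le> N \<Longrightarrow> (\<Sum>i = 1..m + 1 - l. b i * D (m + 1 - i)) = 0"
  shows "l \<le> m \<Longrightarrow> m \<le> N \<Longrightarrow> D m = 0"
proof (induction m rule: less_induct)
  case (less m)
  have "(\<Sum>i = Suc 1..m + 1 - l. b i * D (m + 1 - i)) = 0"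
    using less by (intro sum.neutral ballI) auto
  moreover have "(\<Sum>i = 1..m + 1 - l. b i * D (m + 1 - i)) =
      b 1 * D m + (\<Sum>i = Suc 1..m + 1 - l. b i * D (m + 1 - i))"
    using less.prems by (subst sum.atLeast_Suc_atMost) auto
  ultimately show ?case
    using system[OF less.prems] assms(1) by simp
qed

lemma lb_ge_3: "1 \<le> n \<Longrightarrow> 3 \<le> lb n"
  by (simp add: lb_def)

lemma lb_add_half: "lb n + n div 2 = n + 2"
  unfolding lb_def by presburger

lemma finite_basis: "finite (basis n)"
  by (simp add: basis_def even_basis_def odd_basis_def)

lemma X_in_basis_iff: "X i \<in> basis n \<longleftrightarrow> 1 \<le> i \<and> i \<le> n"
  and Y_in_basis_iff: "Y j \<in> basis n \<longleftrightarrow> 1 \<le> j \<and> j \<le> n + 2"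
  by (auto simp: basis_def even_basis_def odd_basis_def)

lemma sum_basis:
  "(\<Sum>a\<in>basis n. f a) = (\<Sum>i\<in>{1..n}. f (X i)) + (\<Sum>j\<in>{1..n+2}. f (Y j))"
proof -
  have "(\<Sum>a\<in>basis n. f a) = sum f (X ` {1..n}) + sum f (Y ` {1..n+2})"
    unfolding basis_def even_basis_def odd_basis_def
    by (rule sum.union_disjoint) auto
  also have "\<dots> = (\<Sum>i\<in>{1..n}. f (X i)) + (\<Sum>j\<in>{1..n+2}. f (Y j))"
    by (simp add: sum.reindex inj_on_def)
  finally show ?thesis .
qed

lemma ev_in_sspace: "b \<in> basis n \<Longrightarrow> ev b \<in> sspace n"
  by (auto simp: sspace_def ev_def)

lemma ev_Y_in_sspace: "1 \<le> j \<Longrightarrow> j \<le> n + 2 \<Longrightarrow> ev (Y j) \<in> sspace n"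
  by (simp add: ev_in_sspace Y_in_basis_iff)

lemma zero_in_sspace: "(\<lambda>_. 0) \<in> sspace n"
  by (simp add: sspace_def)

lemma sum_in_sspace:
  assumes "\<And>k. k \<in> K \<Longrightarrow> w k \<in> sspace n"
  shows "(\<lambda>c. \<Sum>k\<in>K. f k * w k c) \<in> sspace n"
proof -
  have "(\<Sum>k\<in>K. f k * w k c) = 0" if "c \<notin> basis n" for c
    using assms that by (fastforce simp: sspace_def intro!: sum.neutral)
  then show ?thesis
    unfolding sspace_def by blast
qed

lemma odd_part_at_X: "u \<in> odd_part n \<Longrightarrow> u (X i) = 0"
  by (auto simp: odd_part_def odd_basis_def)

lemma odd_part_at_Y: "u \<in> odd_part n \<Longrightarrow> \<not> (1 \<le> j \<and> j \<le> n + 2) \<Longrightarrow> u (Y j) = 0"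
  by (auto simp: odd_part_def odd_basis_def)

lemma even_part_at_Y: "u \<in> even_part n \<Longrightarrow> u (Y j) = 0"
  by (auto simp: even_part_def even_basis_def)

lemma even_odd_part_subset_sspace: "even_part n \<subseteq> sspace n" "odd_part n \<subseteq> sspace n"
  by (auto simp: even_part_def odd_part_def sspace_def basis_def)

lemma sspace_even_odd_decomp:
  assumes "u \<in> sspace n"
  obtains ue uo where "ue \<in> even_part n" "uo \<in> odd_part n" "u = (\<lambda>c. ue c + uo c)"
proof
  show "(\<lambda>c. case c of X _ \<Rightarrow> u c | Y _ \<Rightarrow> 0) \<in> even_part n"
    using assms by (auto simp: sspace_def even_part_def basis_def odd_basis_def split: bidx.splits)
  show "(\<lambda>c. case c of X _ \<Rightarrow> 0 | Y _ \<Rightarrow> u c) \<in> odd_part n"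
    using assms by (auto simp: sspace_def odd_part_def basis_def even_basis_def split: bidx.splits)
qed (auto split: bidx.split)

section \<open>Coordinates of products\<close>

lemma lprod_ev_ev:
  assumes "a \<in> basis n" "b \<in> basis n"
  shows "lprod n \<beta> (ev a) (ev b) = bprod n \<beta> a b"
proof
  fix c
  have "(\<Sum>b'\<in>basis n. ev a a' * ev b b' * bprod n \<beta> a' b' c) = ev a a' * bprod n \<beta> a' b c" for a'
    using assms by (subst sum_single_nonzero[where k = b]) (auto simp: finite_basis ev_def)
  then show "lprod n \<beta> (ev a) (ev b) c = bprod n \<beta> a b c"
    using assms
    by (simp add: lprod_def) (subst sum_single_nonzero[where k = a], auto simp: finite_basis ev_def)
qed

lemma lprod_ev_Y_top_eq_0: "lprod n \<beta> (ev (Y (n + 2))) v = (\<lambda>_. 0)"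
proof -
  have "bprod n \<beta> (Y (n + 2)) b = (\<lambda>_. 0)" for b
    by (cases b) (auto simp: bprod_def)
  then show ?thesis
    by (auto simp: lprod_def ev_def intro!: sum.neutral)
qed

definition rmul :: "nat \<Rightarrow> (nat \<Rightarrow> complex) \<Rightarrow> bidx \<Rightarrow> vec \<Rightarrow> vec" where
  "rmul n \<beta> b u = (\<lambda>c. \<Sum>a\<in>basis n. u a * bprod n \<beta> a b c)"

lemma bprod_eq_0:
  assumes "b \<noteq> X 1" "b \<noteq> Y 1" "b \<noteq> Y (n + 2)"
  shows "bprod n \<beta> a b = (\<lambda>_. 0)"
  using assms by (cases a; cases b) (auto simp: bprod_def)

lemma lprod_eq_rmul:
  assumes "n \<ge> 1"
  shows "lprod n \<beta> u v = (\<lambda>c. v (X 1) * rmul n \<beta> (X 1) u c + v (Y 1) * rmul n \<beta> (Y 1) u c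
      + v (Y (n + 2)) * rmul n \<beta> (Y (n + 2)) u c)"
proof
  fix c
  have "(\<Sum>b\<in>basis n. u a * v b * bprod n \<beta> a b c) =
      (\<Sum>b\<in>{X 1, Y 1, Y (n + 2)}. u a * v b * bprod n \<beta> a b c)" for a
    using assms by (intro sum.mono_neutral_right)
      (auto simp: finite_basis X_in_basis_iff Y_in_basis_iff bprod_eq_0)
  then show "lprod n \<beta> u v c = v (X 1) * rmul n \<beta> (X 1) u c + v (Y 1) * rmul n \<beta> (Y 1) u c
      + v (Y (n + 2)) * rmul n \<beta> (Y (n + 2)) u c"
    by (simp add: lprod_def rmul_def sum.distrib sum_distrib_left algebra_simps)
qed

lemma rmul_X1_at_X: "rmul n \<beta> (X 1) u (X m) = (if 2 \<le> m \<and> m \<le> n then u (X (m - 1)) else 0)"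
proof -
  have "(\<Sum>i\<in>{1..n}. u (X i) * bprod n \<beta> (X i) (X 1) (X m)) =
      (if 2 \<le> m \<and> m \<le> n then u (X (m - 1)) else 0)"
    by (subst sum_single_nonzero[where k = "m - 1"]) (auto simp: bprod_def ev_def)
  moreover have "(\<Sum>j\<in>{1..n+2}. u (Y j) * bprod n \<beta> (Y j) (X 1) (X m)) = 0"
    by (intro sum.neutral) (auto simp: bprod_def ev_def)
  ultimately show ?thesis by (simp add: rmul_def sum_basis)
qed

lemma rmul_X1_at_Y: "rmul n \<beta> (X 1) u (Y m) = (if 2 \<le> m \<and> m \<le> n + 1 then u (Y (m - 1)) else 0)"
proof -
  have "(\<Sum>j\<in>{1..n+2}. u (Y j) * bprod n \<beta> (Y j) (X 1) (Y m)) =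
      (if 2 \<le> m \<and> m \<le> n + 1 then u (Y (m - 1)) else 0)"
    by (subst sum_single_nonzero[where k = "m - 1"]) (auto simp: bprod_def ev_def)
  moreover have "(\<Sum>i\<in>{1..n}. u (X i) * bprod n \<beta> (X i) (X 1) (Y m)) = 0"
    by (intro sum.neutral) (auto simp: bprod_def ev_def)
  ultimately show ?thesis by (simp add: rmul_def sum_basis)
qed

lemma rmul_Y1_at_X: "rmul n \<beta> (Y 1) u (X m) = (if 1 \<le> m \<and> m \<le> n then u (Y m) else 0)"
proof -
  have "(\<Sum>j\<in>{1..n+2}. u (Y j) * bprod n \<beta> (Y j) (Y 1) (X m)) =
      (if 1 \<le> m \<and> m \<le> n then u (Y m) else 0)"
    by (subst sum_single_nonzero[where k = m]) (auto simp: bprod_def ev_def)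
  moreover have "(\<Sum>i\<in>{1..n}. u (X i) * bprod n \<beta> (X i) (Y 1) (X m)) = 0"
    by (intro sum.neutral) (auto simp: bprod_def ev_def)
  ultimately show ?thesis by (simp add: rmul_def sum_basis)
qed

lemma rmul_Y1_at_Y: "rmul n \<beta> (Y 1) u (Y m) = (if 2 \<le> m \<and> m \<le> n + 1 then u (X (m - 1)) / 2 else 0)"
proof -
  have "(\<Sum>i\<in>{1..n}. u (X i) * bprod n \<beta> (X i) (Y 1) (Y m)) =
      (if 2 \<le> m \<and> m \<le> n + 1 then u (X (m - 1)) / 2 else 0)"
    by (subst sum_single_nonzero[where k = "m - 1"]) (auto simp: bprod_def ev_def)
  moreover have "(\<Sum>j\<in>{1..n+2}. u (Y j) * bprod n \<beta> (Y j) (Y 1) (Y m)) = 0"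
    by (intro sum.neutral) (auto simp: bprod_def ev_def)
  ultimately show ?thesis by (simp add: rmul_def sum_basis)
qed

lemma rmul_Y_top_at_X:
  assumes "m + 1 < lb n"
  shows "rmul n \<beta> (Y (n + 2)) u (X m) = 0"
proof -
  have "(\<Sum>k\<in>{lb n..n+2-j}. \<beta> k * ev (X (k - 2 + j)) (X m)) = 0" if "1 \<le> j" for j
    using assms that by (intro sum.neutral) (auto simp: ev_def)
  then have "(\<Sum>j\<in>{1..n+2}. u (Y j) * bprod n \<beta> (Y j) (Y (n + 2)) (X m)) = 0"
    by (intro sum.neutral) (auto simp: bprod_def)
  moreover have "(\<Sum>i\<in>{1..n}. u (X i) * bprod n \<beta> (X i) (Y (n + 2)) (X m)) = 0"
    by (intro sum.neutral) (auto simp: bprod_def ev_def)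
  ultimately show ?thesis by (simp add: rmul_def sum_basis)
qed

lemma rmul_Y_top_at_Y:
  "rmul n \<beta> (Y (n + 2)) u (Y m) =
    (\<Sum>i\<in>{1..n div 2}. u (X i) * (if lb n + i \<le> m + 1 \<and> m \<le> n + 1 then \<beta> (m + 1 - i) else 0))"
proof -
  have "u (X i) * bprod n \<beta> (X i) (Y (n + 2)) (Y m) =
      (if i \<le> n div 2
       then u (X i) * (if lb n + i \<le> m + 1 \<and> m \<le> n + 1 then \<beta> (m + 1 - i) else 0) else 0)"
    if "1 \<le> i" for i
  proof -
    have "(\<Sum>k\<in>{lb n..n+2-i}. \<beta> k * ev (Y (k - 1 + i)) (Y m)) =
        (if lb n + i \<le> m + 1 \<and> m \<le> n + 1 then \<beta> (m + 1 - i) else 0)"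
      using that by (subst sum_single_nonzero[where k = "m + 1 - i"]) (auto simp: ev_def lb_def)
    then show ?thesis
      using that by (auto simp: bprod_def)
  qed
  then have "(\<Sum>i\<in>{1..n}. u (X i) * bprod n \<beta> (X i) (Y (n + 2)) (Y m)) =
      (\<Sum>i\<in>{1..n}. if i \<le> n div 2 then u (X i) *
        (if lb n + i \<le> m + 1 \<and> m \<le> n + 1 then \<beta> (m + 1 - i) else 0) else 0)"
    by (intro sum.cong) auto
  also have "\<dots> = (\<Sum>i\<in>{1..n div 2}. u (X i) *
      (if lb n + i \<le> m + 1 \<and> m \<le> n + 1 then \<beta> (m + 1 - i) else 0))"
    by (subst sum.If_cases) (auto intro!: sum.cong)
  moreover have "(\<Sum>j\<in>{1..n+2}. u (Y j) * bprod n \<beta> (Y j) (Y (n + 2)) (Y m)) = 0"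
    by (intro sum.neutral) (auto simp: bprod_def ev_def)
  ultimately show ?thesis by (simp add: rmul_def sum_basis)
qed

(* The simplifier rewrites 1 to Suc 0 and n + 2 to Suc (Suc n), so the rewrite rules are stated in
   that normal form. *)
lemmas rmul_at_basis [simp] =
  rmul_X1_at_X[unfolded One_nat_def] rmul_X1_at_Y[unfolded One_nat_def]
  rmul_Y1_at_X[unfolded One_nat_def] rmul_Y1_at_Y[unfolded One_nat_def]
  rmul_Y_top_at_X[unfolded add_2_eq_Suc'] rmul_Y_top_at_Y[unfolded add_2_eq_Suc']

lemma lprod_at_X_low:
  assumes "n \<ge> 1" "v (X 1) = 0" "1 \<le> i" "i + 1 < lb n"
  shows "lprod n \<beta> u v (X i) = u (Y i) * v (Y 1)"
proof -
  have "i \<le> n"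
    using assms(1,4) by (simp add: lb_def)
  then show ?thesis
    using assms by (simp add: lprod_eq_rmul)
qed

lemma lprod_ev_Y_ev_X1: "1 \<le> k \<Longrightarrow> k \<le> n \<Longrightarrow> lprod n \<beta> (ev (Y k)) (ev (X 1)) = ev (Y (k + 1))"
  by (simp add: lprod_ev_ev X_in_basis_iff Y_in_basis_iff bprod_def)

lemma lprod_ev_Y1_ev_Y1: "n \<ge> 1 \<Longrightarrow> lprod n \<beta> (ev (Y 1)) (ev (Y 1)) = ev (X 1)"
  by (simp add: lprod_ev_ev Y_in_basis_iff bprod_def)

lemma lprod_ev_X1_ev_Y_top:
  assumes "n \<ge> 2"
  shows "lprod n \<beta> (ev (X 1)) (ev (Y (n + 2))) = (\<lambda>c. \<Sum>k\<in>{lb n..n+1}. \<beta> k * ev (Y k) c)"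
proof -
  have "1 \<le> n div 2" "3 \<le> lb n"
    using assms by (auto simp: lb_def)
  then show ?thesis
    by (auto simp: lprod_ev_ev X_in_basis_iff Y_in_basis_iff bprod_def intro!: sum.cong)
qed

lemma even_part_right_multiple_Y1:
  assumes "n \<ge> 1" "u \<in> even_part n"
  obtains v where "v \<in> sspace n" "u = lprod n \<beta> v (ev (Y 1))"
proof
  let ?v = "\<lambda>c. case c of X _ \<Rightarrow> 0 | Y j \<Rightarrow> if j \<le> n then u (X j) else 0"
  have u_X: "u (X i) = 0" if "\<not> (1 \<le> i \<and> i \<le> n)" for i
    using assms(2) that by (auto simp: even_part_def even_basis_def)
  have u_Y: "u (Y j) = 0" for j
    using assms(2) by (auto simp: even_part_def even_basis_def)
  show "?v \<in> sspace n"
    using u_X by (auto simp: sspace_def Y_in_basis_iff split: bidx.splits if_splits)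
  show "u = lprod n \<beta> ?v (ev (Y 1))"
  proof
    fix c
    show "u c = lprod n \<beta> ?v (ev (Y 1)) c"
      using assms(1) u_X u_Y
      by (cases c) (auto simp: lprod_eq_rmul ev_def)
  qed
qed

section \<open>Diagonal isomorphisms\<close>

lemma super_iso_diagonal:
  fixes d :: "bidx \<Rightarrow> complex"
  assumes nonzero: "\<And>c. d c \<noteq> 0"
    and weights_mult: "\<And>a b c. d c * bprod n \<beta> a b c = d a * d b * bprod n \<beta>' a b c"
  shows "super_iso n \<beta> \<beta>' (\<lambda>u c. d c * u c)"
proof -
  let ?\<phi> = "\<lambda>u c. d c * u c"
  have supp: "?\<phi> u c \<noteq> 0 \<longleftrightarrow> u c \<noteq> 0" for u c
    using nonzero by simp
  have "inj_on ?\<phi> (sspace n)"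
    using nonzero by (auto intro!: inj_onI ext dest: fun_cong)
  moreover have "?\<phi> ` sspace n = sspace n"
  proof
    show "?\<phi> ` sspace n \<subseteq> sspace n"
      using supp by (auto simp: sspace_def)
    show "sspace n \<subseteq> ?\<phi> ` sspace n"
    proof
      fix v assume v: "v \<in> sspace n"
      show "v \<in> ?\<phi> ` sspace n"
      proof (rule image_eqI[where x = "\<lambda>c. v c / d c"])
        show "v = ?\<phi> (\<lambda>c. v c / d c)"
          using nonzero by simp
        show "(\<lambda>c. v c / d c) \<in> sspace n"
          using v by (auto simp: sspace_def)
      qed
    qed
  qed
  moreover have "?\<phi> (lprod n \<beta> u v) = lprod n \<beta>' (?\<phi> u) (?\<phi> v)" for u v
  proof
    fix c
    have "?\<phi> (lprod n \<beta> u v) c = (\<Sum>a\<in>basis n. \<Sum>b\<in>basis n. u a * v b * (d c * bprod n \<beta> a b c))"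
      by (simp add: lprod_def sum_distrib_left algebra_simps)
    also have "\<dots> = lprod n \<beta>' (?\<phi> u) (?\<phi> v) c"
      by (simp add: weights_mult lprod_def algebra_simps)
    finally show "?\<phi> (lprod n \<beta> u v) c = lprod n \<beta>' (?\<phi> u) (?\<phi> v) c" .
  qed
  ultimately show ?thesis
    using supp unfolding super_iso_def bij_betw_def
    by (auto simp: algebra_simps even_part_def odd_part_def)
qed

definition diag_weight :: "nat \<Rightarrow> complex \<Rightarrow> complex \<Rightarrow> bidx \<Rightarrow> complex" where
  "diag_weight n e g b =
    (case b of X i \<Rightarrow> e ^ (2 * i) | Y j \<Rightarrow> if j = n + 2 then g else e ^ (2 * j - 1))"

lemma scaled_sum_ev:
  assumes "\<And>k. k \<in> K \<Longrightarrow> \<beta> k * d (f k) = w * \<beta>' k"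
  shows "d c * (\<Sum>k\<in>K. \<beta> k * ev (f k) c) = w * (\<Sum>k\<in>K. \<beta>' k * ev (f k) c)"
proof -
  have termwise: "d c * (\<beta> k * ev (f k) c) = w * (\<beta>' k * ev (f k) c)" if "k \<in> K" for k
    using assms[OF that] by (simp add: ev_def algebra_simps)
  show ?thesis
    by (simp add: sum_distrib_left termwise cong: sum.cong)
qed

lemma diag_weight_X_Y_top:
  assumes scaling: "\<forall>k\<in>{lb n..n+1}. \<beta> k * e ^ (2 * k - 3) = g * \<beta>' k"
    and i: "1 \<le> i" "i \<le> n div 2"
  shows "diag_weight n e g c * (\<Sum>k\<in>{lb n..n+2-i}. \<beta> k * ev (Y (k - 1 + i)) c) =
    diag_weight n e g (X i) * diag_weight n e g (Y (n + 2)) *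
      (\<Sum>k\<in>{lb n..n+2-i}. \<beta>' k * ev (Y (k - 1 + i)) c)"
proof (rule scaled_sum_ev)
  fix k assume k: "k \<in> {lb n..n+2-i}"
  moreover have "3 \<le> lb n"
    using i by (simp add: lb_def)
  ultimately have "diag_weight n e g (Y (k - 1 + i)) = e ^ (2 * i) * e ^ (2 * k - 3)"
    using i
    by (auto simp: diag_weight_def power_add[symmetric] intro!: arg_cong[where f = "power e"])
  then show "\<beta> k * diag_weight n e g (Y (k - 1 + i)) =
      diag_weight n e g (X i) * diag_weight n e g (Y (n + 2)) * \<beta>' k"
    using scaling k i by (auto simp: diag_weight_def algebra_simps)
qed

lemma diag_weight_Y_Y_top:
  assumes scaling: "\<forall>k\<in>{lb n..n+1}. \<beta> k * e ^ (2 * k - 3) = g * \<beta>' k"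
    and j: "1 \<le> j" "j \<le> n div 2"
  shows "diag_weight n e g c * (\<Sum>k\<in>{lb n..n+2-j}. \<beta> k * ev (X (k - 2 + j)) c) =
    diag_weight n e g (Y j) * diag_weight n e g (Y (n + 2)) *
      (\<Sum>k\<in>{lb n..n+2-j}. \<beta>' k * ev (X (k - 2 + j)) c)"
proof (rule scaled_sum_ev)
  fix k assume k: "k \<in> {lb n..n+2-j}"
  moreover have "3 \<le> lb n"
    using j by (simp add: lb_def)
  ultimately have "diag_weight n e g (X (k - 2 + j)) = e ^ (2 * j - 1) * e ^ (2 * k - 3)"
    using j
    by (auto simp: diag_weight_def power_add[symmetric] intro!: arg_cong[where f = "power e"])
  then show "\<beta> k * diag_weight n e g (X (k - 2 + j)) =
      diag_weight n e g (Y j) * diag_weight n e g (Y (n + 2)) * \<beta>' k"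
    using scaling k j by (auto simp: diag_weight_def algebra_simps)
qed

lemma diag_weight_bprod:
  assumes scaling: "\<forall>k\<in>{lb n..n+1}. \<beta> k * e ^ (2 * k - 3) = g * \<beta>' k"
  shows "diag_weight n e g c * bprod n \<beta> a b c =
    diag_weight n e g a * diag_weight n e g b * bprod n \<beta>' a b c"
proof (cases a; cases b)
  fix i l assume "a = X i" "b = X l"
  then show ?thesis
    by (auto simp: bprod_def diag_weight_def ev_def power_add[symmetric])
next
  fix i l assume "a = X i" "b = Y l"
  then show ?thesis
    using diag_weight_X_Y_top[OF scaling, of i]
    by (auto simp: bprod_def diag_weight_def ev_def power_add[symmetric])
next
  fix j l assume "a = Y j" "b = X l"
  then show ?thesis
    by (auto simp: bprod_def diag_weight_def ev_def power_add[symmetric])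
next
  fix j l assume "a = Y j" "b = Y l"
  moreover have "e ^ (2 * j) = e ^ (2 * j - 1) * e" if "1 \<le> j"
    using that by (cases j) auto
  ultimately show ?thesis
    using diag_weight_Y_Y_top[OF scaling, of j]
    by (auto simp: bprod_def diag_weight_def ev_def power_add[symmetric])
qed

lemma isomorphic_L_if_scaling:
  assumes "a1 \<noteq> 0" "b \<noteq> 0" and scaling: "\<forall>j\<in>{lb n..n+1}. b * \<beta> j = a1 ^ (2 * j - 3) * \<beta>' j"
  shows "isomorphic_L n \<beta> \<beta>'"
proof -
  let ?d = "diag_weight n (1 / a1) (1 / b)"
  have "\<forall>k\<in>{lb n..n+1}. \<beta> k * (1 / a1) ^ (2 * k - 3) = 1 / b * \<beta>' k"
    using scaling assms(1,2) by (simp add: power_one_over field_simps)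
  then have "super_iso n \<beta> \<beta>' (\<lambda>u c. ?d c * u c)"
    using assms(1,2) by (intro super_iso_diagonal diag_weight_bprod)
      (auto simp: diag_weight_def split: bidx.split)
  then show ?thesis
    unfolding isomorphic_L_def by blast
qed

section \<open>Invariants of an isomorphism\<close>

locale L_isomorphism =
  fixes n :: nat and \<beta> \<beta>' :: "nat \<Rightarrow> complex" and \<phi> :: "vec \<Rightarrow> vec"
  assumes two_le_n: "2 \<le> n" and iso: "super_iso n \<beta> \<beta>' \<phi>"
begin

lemma one_le_n: "1 \<le> n"
  using two_le_n by simp

lemmas lb_facts = lb_ge_3[OF one_le_n] lb_add_half[of n]

lemma phi_linear:
  "u \<in> sspace n \<Longrightarrow> v \<in> sspace n \<Longrightarrow> \<phi> (\<lambda>c. s * u c + t * v c) = (\<lambda>c. s * \<phi> u c + t * \<phi> v c)"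
  using iso by (simp add: super_iso_def)

lemma phi_inj: "inj_on \<phi> (sspace n)"
  and phi_image_sspace: "\<phi> ` sspace n = sspace n"
  using iso by (simp_all add: super_iso_def bij_betw_def)

lemma phi_even_part: "u \<in> even_part n \<Longrightarrow> \<phi> u \<in> even_part n"
  and phi_odd_part: "u \<in> odd_part n \<Longrightarrow> \<phi> u \<in> odd_part n"
  using iso by (auto simp: super_iso_def)

lemma phi_mult: "u \<in> sspace n \<Longrightarrow> v \<in> sspace n \<Longrightarrow> \<phi> (lprod n \<beta> u v) = lprod n \<beta>' (\<phi> u) (\<phi> v)"
  using iso by (simp add: super_iso_def)

lemma phi_scale: "u \<in> sspace n \<Longrightarrow> \<phi> (\<lambda>c. t * u c) = (\<lambda>c. t * \<phi> u c)"
  using phi_linear[of u u t 0] by simp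

lemma phi_add: "u \<in> sspace n \<Longrightarrow> v \<in> sspace n \<Longrightarrow> \<phi> (\<lambda>c. u c + v c) = (\<lambda>c. \<phi> u c + \<phi> v c)"
  using phi_linear[of u v 1 1] by simp

lemma phi_zero: "\<phi> (\<lambda>_. 0) = (\<lambda>_. 0)"
  using phi_linear[OF zero_in_sspace zero_in_sspace, of 0 0] by simp

lemma phi_sum:
  assumes "finite K" "\<And>k. k \<in> K \<Longrightarrow> w k \<in> sspace n"
  shows "\<phi> (\<lambda>c. \<Sum>k\<in>K. f k * w k c) = (\<lambda>c. \<Sum>k\<in>K. f k * \<phi> (w k) c)"
  using assms
proof (induction K rule: finite_induct)
  case empty
  show ?case
    using phi_zero by simp
next
  case (insert x F)
  have "(\<lambda>c. \<Sum>k\<in>F. f k * w k c) \<in> sspace n"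
    using insert.prems by (intro sum_in_sspace) auto
  then show ?case
    using insert phi_linear[of "w x" "\<lambda>c. \<Sum>k\<in>F. f k * w k c" "f x" 1] by simp
qed

lemma ev_X1_in_sspace: "ev (X 1) \<in> sspace n"
  using one_le_n by (simp add: ev_in_sspace X_in_basis_iff)

lemma phi_ev_Y_odd: "1 \<le> j \<Longrightarrow> j \<le> n + 2 \<Longrightarrow> \<phi> (ev (Y j)) \<in> odd_part n"
  by (rule phi_odd_part) (auto simp: odd_part_def odd_basis_def ev_def)

lemma phi_ev_X1_even: "\<phi> (ev (X 1)) \<in> even_part n"
  using one_le_n by (intro phi_even_part) (auto simp: even_part_def even_basis_def ev_def)

definition \<alpha> :: complex where
  "\<alpha> = \<phi> (ev (Y 1)) (Y 1)"

definition \<gamma> :: complex where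
  "\<gamma> = \<phi> (ev (Y (n + 2))) (Y (n + 2))"

lemma phi_ev_Y_top_at_Y_low:
  assumes "1 \<le> j" "j \<le> n"
  shows "\<phi> (ev (Y (n + 2))) (Y j) = 0"
proof -
  (* y_(n+2) annihilates L from the left, so [\<phi>(y_(n+2)), x_1] = 0, while right multiplication
     by x_1 moves the y_j-coordinate to y_(j+1). *)
  obtain w where w: "w \<in> sspace n" "\<phi> w = ev (X 1)"
    using phi_image_sspace ev_X1_in_sspace by (metis imageE)
  have "lprod n \<beta>' (\<phi> (ev (Y (n + 2)))) (ev (X 1)) = \<phi> (lprod n \<beta> (ev (Y (n + 2))) w)"
    using phi_mult[OF ev_Y_in_sspace w(1)] w(2) by simp
  also have "\<dots> = (\<lambda>_. 0)"
    using lprod_ev_Y_top_eq_0[of n \<beta> w] by (simp add: phi_zero)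
  finally have "lprod n \<beta>' (\<phi> (ev (Y (n + 2)))) (ev (X 1)) (Y (j + 1)) = 0"
    by simp
  then show ?thesis
    using assms one_le_n by (simp add: lprod_eq_rmul ev_def)
qed

lemma phi_ev_X1_at_X:
  assumes "1 \<le> i" "i \<le> n div 2"
  shows "\<phi> (ev (X 1)) (X i) = \<alpha> * \<phi> (ev (Y 1)) (Y i)"
proof -
  have "\<phi> (ev (X 1)) = lprod n \<beta>' (\<phi> (ev (Y 1))) (\<phi> (ev (Y 1)))"
    using phi_mult[OF ev_Y_in_sspace ev_Y_in_sspace, of 1 1] lprod_ev_Y1_ev_Y1[OF one_le_n] by simp
  moreover have "i + 1 < lb n"
    using assms by (simp add: lb_def)
  ultimately show ?thesis
    using assms odd_part_at_X[OF phi_ev_Y_odd] one_le_n by (simp add: lprod_at_X_low \<alpha>_def)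
qed

lemma phi_ev_X1_at_X1: "\<phi> (ev (X 1)) (X 1) = \<alpha>\<^sup>2"
  using phi_ev_X1_at_X[of 1] two_le_n by (simp add: \<alpha>_def power2_eq_square)

lemma phi_ev_Y_Suc_at_Y:
  assumes "1 \<le> k" "k \<le> n"
  shows "\<phi> (ev (Y (k + 1))) (Y m) =
    \<alpha>\<^sup>2 * (if 2 \<le> m \<and> m \<le> n + 1 then \<phi> (ev (Y k)) (Y (m - 1)) else 0)"
proof -
  have "\<phi> (ev (Y (k + 1))) = lprod n \<beta>' (\<phi> (ev (Y k))) (\<phi> (ev (X 1)))"
    using phi_mult[OF ev_Y_in_sspace ev_X1_in_sspace, of k] lprod_ev_Y_ev_X1[OF assms] assms by simp
  then show ?thesis
    using even_part_at_Y[OF phi_ev_X1_even] one_le_n phi_ev_X1_at_X1 by (simp add: lprod_eq_rmul)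
qed

lemma phi_ev_Y_at_Y:
  assumes "1 \<le> k" "k \<le> n + 1" "1 \<le> m" "m \<le> n + 1"
  shows "\<phi> (ev (Y k)) (Y m) =
    (if k \<le> m then \<alpha> ^ (2 * (k - 1)) * \<phi> (ev (Y 1)) (Y (m + 1 - k)) else 0)"
  using assms(1,2,3,4)
proof (induction k arbitrary: m rule: dec_induct)
  case base
  then show ?case by simp
next
  case (step l)
  show ?case
  proof (cases "Suc l \<le> m")
    case True
    have "l \<le> n + 1" "1 \<le> m - 1" "m - 1 \<le> n + 1" "l \<le> m - 1" "m - 1 + 1 - l = m + 1 - Suc l"
      using step.hyps step.prems True by auto
    then have IH: "\<phi> (ev (Y l)) (Y (m - 1)) = \<alpha> ^ (2 * (l - 1)) * \<phi> (ev (Y 1)) (Y (m + 1 - Suc l))"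
      using step.IH[of "m - 1"] by simp
    have pow: "\<alpha>\<^sup>2 * \<alpha> ^ (2 * (l - 1)) = \<alpha> ^ (2 * (Suc l - 1))"
      using step.hyps(1) by (cases l) (simp_all add: power_add[symmetric])
    have "\<phi> (ev (Y (Suc l))) (Y m) = \<alpha>\<^sup>2 * \<phi> (ev (Y l)) (Y (m - 1))"
      using phi_ev_Y_Suc_at_Y[of l m] step True by simp
    then show ?thesis
      using True IH pow by (simp add: mult.assoc[symmetric])
  next
    case False
    then show ?thesis
      using phi_ev_Y_Suc_at_Y[of l m] step.IH[of "m - 1"] step.hyps step.prems by auto
  qed
qed

lemma phi_ev_Y_penult: "\<phi> (ev (Y (n + 1))) = (\<lambda>c. \<alpha> ^ (2 * n + 1) * ev (Y (n + 1)) c)"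
proof
  fix c
  have odd: "\<phi> (ev (Y (n + 1))) \<in> odd_part n"
    by (rule phi_ev_Y_odd) simp_all
  show "\<phi> (ev (Y (n + 1))) c = \<alpha> ^ (2 * n + 1) * ev (Y (n + 1)) c"
  proof (cases c)
    case (X i)
    then show ?thesis
      using odd_part_at_X[OF odd] by (simp add: ev_def)
  next
    case (Y m)
    consider "1 \<le> m \<and> m \<le> n + 1" | "m = n + 2" | "\<not> (1 \<le> m \<and> m \<le> n + 2)"
      by linarith
    then show ?thesis
    proof cases
      case 1
      then show ?thesis
        using Y phi_ev_Y_at_Y[of "n + 1" m] by (auto simp: ev_def \<alpha>_def power_add)
    next
      case 2
      then show ?thesis
        using Y phi_ev_Y_Suc_at_Y[of n "n + 2"] one_le_n by (simp add: ev_def)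
    next
      case 3
      then show ?thesis
        using Y odd_part_at_Y[OF odd] by (auto simp: ev_def)
    qed
  qed
qed

lemma alpha_nonzero: "\<alpha> \<noteq> 0"
proof
  (* Every even element is a right multiple of y_1, and the x_1-coordinate of [u, \<phi>(y_1)] is
     u(y_1) \<alpha>; so for \<alpha> = 0 no preimage of x_1 exists. *)
  assume "\<alpha> = 0"
  obtain w where w: "w \<in> sspace n" "\<phi> w = ev (X 1)"
    using phi_image_sspace ev_X1_in_sspace by (metis imageE)
  obtain we wo
    where we: "we \<in> even_part n" and wo: "wo \<in> odd_part n" and w_eq: "w = (\<lambda>c. we c + wo c)"
    using sspace_even_odd_decomp[OF w(1)] by blast
  obtain v where v: "v \<in> sspace n" "we = lprod n \<beta> v (ev (Y 1))"
    using even_part_right_multiple_Y1[OF one_le_n we] by blast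
  have "\<phi> we (X 1) = \<phi> v (Y 1) * \<alpha>"
    using v phi_mult[OF v(1) ev_Y_in_sspace, of 1] one_le_n odd_part_at_X[OF phi_ev_Y_odd, of 1 1]
    by (simp add: lprod_at_X_low lb_def \<alpha>_def)
  moreover have "\<phi> wo (X 1) = 0"
    using odd_part_at_X[OF phi_odd_part[OF wo]] .
  moreover have "\<phi> w = (\<lambda>c. \<phi> we c + \<phi> wo c)"
    unfolding w_eq using we wo even_odd_part_subset_sspace by (intro phi_add) auto
  ultimately have "\<phi> w (X 1) = 0"
    using \<open>\<alpha> = 0\<close> by simp
  then show False
    using w(2) by (simp add: ev_def)
qed

lemma phi_ev_Y_top_span: "\<exists>s. \<phi> (ev (Y (n + 2))) = (\<lambda>c. s * ev (Y (n + 1)) c + \<gamma> * ev (Y (n + 2)) c)"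
proof
  let ?C = "\<phi> (ev (Y (n + 2)))"
  have odd: "?C \<in> odd_part n"
    by (rule phi_ev_Y_odd) simp_all
  show "?C = (\<lambda>c. ?C (Y (n + 1)) * ev (Y (n + 1)) c + \<gamma> * ev (Y (n + 2)) c)"
  proof
    fix c
    show "?C c = ?C (Y (n + 1)) * ev (Y (n + 1)) c + \<gamma> * ev (Y (n + 2)) c"
    proof (cases c)
      case (X i)
      then show ?thesis
        using odd_part_at_X[OF odd] by (simp add: ev_def)
    next
      case (Y m)
      moreover have "m = n + 1 \<or> m = n + 2 \<or> (1 \<le> m \<and> m \<le> n) \<or> \<not> (1 \<le> m \<and> m \<le> n + 2)"
        by linarith
      ultimately show ?thesis
        using phi_ev_Y_top_at_Y_low[of m] odd_part_at_Y[OF odd, of m] by (auto simp: ev_def \<gamma>_def)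
    qed
  qed
qed

lemma gamma_nonzero: "\<gamma> \<noteq> 0"
proof
  assume "\<gamma> = 0"
  obtain s where span: "\<phi> (ev (Y (n + 2))) = (\<lambda>c. s * ev (Y (n + 1)) c + \<gamma> * ev (Y (n + 2)) c)"
    using phi_ev_Y_top_span by blast
  define t where "t = s / \<alpha> ^ (2 * n + 1)"
  have "\<phi> (ev (Y (n + 2))) = \<phi> (\<lambda>c. t * ev (Y (n + 1)) c)"
    using span \<open>\<gamma> = 0\<close> phi_scale[OF ev_Y_in_sspace, of "n + 1" t]
      phi_ev_Y_penult alpha_nonzero
    by (simp add: t_def)
  moreover have "(\<lambda>c. t * ev (Y (n + 1)) c) \<in> sspace n"
    by (auto simp: sspace_def ev_def Y_in_basis_iff)
  ultimately have "ev (Y (n + 2)) = (\<lambda>c. t * ev (Y (n + 1)) c)"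
    using inj_onD[OF phi_inj] ev_Y_in_sspace[of "n + 2"] by simp
  then have "ev (Y (n + 2)) (Y (n + 2)) = t * ev (Y (n + 1)) (Y (n + 2))"
    by (rule fun_cong)
  then show False
    by (simp add: ev_def)
qed

lemma phi_lprod_X1_Y_top_at_Y_via_linearity:
  assumes "lb n \<le> m" "m \<le> n + 1"
  shows "\<phi> (lprod n \<beta> (ev (X 1)) (ev (Y (n + 2)))) (Y m) =
    (\<Sum>i = 1..m + 1 - lb n. \<alpha> ^ (2 * (m - i)) * \<beta> (m + 1 - i) * \<phi> (ev (Y 1)) (Y i))"
proof -
  have "\<phi> (lprod n \<beta> (ev (X 1)) (ev (Y (n + 2)))) (Y m) =
      (\<Sum>k = lb n..n + 1. \<beta> k * \<phi> (ev (Y k)) (Y m))"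
    using lprod_ev_X1_ev_Y_top[OF two_le_n, of \<beta>] lb_facts
      phi_sum[of "{lb n..n + 1}" "\<lambda>k. ev (Y k)" \<beta>]
    by (simp add: ev_Y_in_sspace)
  also have "\<dots> = (\<Sum>k = lb n..m. \<beta> k * (\<alpha> ^ (2 * (k - 1)) * \<phi> (ev (Y 1)) (Y (m + 1 - k))))"
    using assms lb_facts phi_ev_Y_at_Y by (intro sum.mono_neutral_cong_right) auto
  also have "\<dots> = (\<Sum>i = 1..m + 1 - lb n. \<alpha> ^ (2 * (m - i)) * \<beta> (m + 1 - i) * \<phi> (ev (Y 1)) (Y i))"
    using assms lb_facts
    by (intro sum.reindex_bij_witness[of _ "\<lambda>i. m + 1 - i" "\<lambda>k. m + 1 - k"])
      (auto simp: Suc_diff_le)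
  finally show ?thesis .
qed

lemma phi_lprod_X1_Y_top_at_Y_via_homomorphism:
  assumes "lb n \<le> m" "m \<le> n + 1"
  shows "\<phi> (lprod n \<beta> (ev (X 1)) (ev (Y (n + 2)))) (Y m) =
    (\<Sum>i = 1..m + 1 - lb n. \<gamma> * \<alpha> * \<beta>' (m + 1 - i) * \<phi> (ev (Y 1)) (Y i))"
proof -
  let ?A = "\<phi> (ev (X 1))" and ?C = "\<phi> (ev (Y (n + 2)))"
  have "\<phi> (lprod n \<beta> (ev (X 1)) (ev (Y (n + 2)))) = lprod n \<beta>' ?A ?C"
    by (intro phi_mult ev_X1_in_sspace ev_Y_in_sspace) simp_all
  also have "\<dots> = (\<lambda>c. \<gamma> * rmul n \<beta>' (Y (n + 2)) ?A c)"
    using lprod_eq_rmul[OF one_le_n, of \<beta>' ?A ?C] phi_ev_Y_top_at_Y_low[of 1] one_le_n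
      odd_part_at_X[OF phi_ev_Y_odd[of "n + 2"]]
    by (simp add: \<gamma>_def)
  finally have "\<phi> (lprod n \<beta> (ev (X 1)) (ev (Y (n + 2)))) (Y m) =
      \<gamma> * (\<Sum>i = 1..n div 2.
        ?A (X i) * (if lb n + i \<le> m + 1 \<and> m \<le> n + 1 then \<beta>' (m + 1 - i) else 0))"
    by (simp add: rmul_Y_top_at_Y)
  also have "(\<Sum>i = 1..n div 2.
        ?A (X i) * (if lb n + i \<le> m + 1 \<and> m \<le> n + 1 then \<beta>' (m + 1 - i) else 0)) =
      (\<Sum>i = 1..m + 1 - lb n. \<alpha> * \<beta>' (m + 1 - i) * \<phi> (ev (Y 1)) (Y i))"
    using assms lb_facts phi_ev_X1_at_X by (intro sum.mono_neutral_cong_right) auto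
  finally show ?thesis
    by (simp add: sum_distrib_left mult.assoc)
qed

lemma scaling_relation:
  assumes "j \<in> {lb n..n + 1}"
  shows "1 / \<gamma> * \<beta> j = (1 / \<alpha>) ^ (2 * j - 3) * \<beta>' j"
proof -
  define D where "D k = \<gamma> * \<alpha> * \<beta>' k - \<alpha> ^ (2 * (k - 1)) * \<beta> k" for k
  have "D j = 0"
  proof (rule triangular_system_zero
      [where b = "\<lambda>i. \<phi> (ev (Y 1)) (Y i)" and l = "lb n" and N = "n + 1"])
    show "\<phi> (ev (Y 1)) (Y 1) \<noteq> 0"
      using alpha_nonzero by (simp add: \<alpha>_def)
    fix m assume m: "lb n \<le> m" "m \<le> n + 1"
    have "(\<Sum>i = 1..m + 1 - lb n. \<phi> (ev (Y 1)) (Y i) * D (m + 1 - i)) =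
        (\<Sum>i = 1..m + 1 - lb n. \<gamma> * \<alpha> * \<beta>' (m + 1 - i) * \<phi> (ev (Y 1)) (Y i))
      - (\<Sum>i = 1..m + 1 - lb n. \<alpha> ^ (2 * (m - i)) * \<beta> (m + 1 - i) * \<phi> (ev (Y 1)) (Y i))"
      by (simp add: D_def sum_subtractf[symmetric] algebra_simps)
    then show "(\<Sum>i = 1..m + 1 - lb n. \<phi> (ev (Y 1)) (Y i) * D (m + 1 - i)) = 0"
      using phi_lprod_X1_Y_top_at_Y_via_linearity[OF m]
        phi_lprod_X1_Y_top_at_Y_via_homomorphism[OF m]
      by simp
  qed (use assms in auto)
  moreover have "\<alpha> ^ (2 * (j - 1)) = \<alpha> ^ (2 * j - 3) * \<alpha>"
  proof -
    have "2 * (j - 1) = Suc (2 * j - 3)"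
      using assms lb_facts by auto
    then show ?thesis
      by (simp add: mult.commute)
  qed
  ultimately have "\<gamma> * \<beta>' j = \<alpha> ^ (2 * j - 3) * \<beta> j"
    using alpha_nonzero by (simp add: D_def algebra_simps)
  then show ?thesis
    using alpha_nonzero gamma_nonzero by (simp add: power_one_over field_simps)
qed

end

lemma scaling_if_isomorphic_L:
  assumes "1 \<le> n" "isomorphic_L n \<beta> \<beta>'"
  shows "\<exists>a1 b. a1 \<noteq> 0 \<and> b \<noteq> 0 \<and> (\<forall>j\<in>{lb n..n + 1}. b * \<beta> j = a1 ^ (2 * j - 3) * \<beta>' j)"
proof (cases "n = 1")
  case True
  then show ?thesis
    by (intro exI[of _ 1]) (simp add: lb_def)
next
  case False
  obtain \<phi> where "super_iso n \<beta> \<beta>' \<phi>"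
    using assms(2) by (auto simp: isomorphic_L_def)
  then interpret L_isomorphism n \<beta> \<beta>' \<phi>
    using False assms(1) by unfold_locales simp_all
  show ?thesis
    using alpha_nonzero gamma_nonzero scaling_relation
    by (intro exI[of _ "1 / \<alpha>"] exI[of _ "1 / \<gamma>"] conjI ballI) auto
qed

theorem theorem3p4:
  fixes n :: nat and \<beta> \<beta>' :: "nat \<Rightarrow> complex"
  assumes "n \<ge> 1"
  shows "isomorphic_L n \<beta> \<beta>' \<longleftrightarrow>
    (\<exists>a1 b::complex. a1 \<noteq> 0 \<and> b \<noteq> 0 \<and>
       (\<forall>j\<in>{(n + 5) div 2..n+1}. b * \<beta> j = a1 ^ (2 * j - 3) * \<beta>' j))"
  using scaling_if_isomorphic_L[OF assms] isomorphic_L_if_scaling unfolding lb_def by blast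

end
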